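(* Let $q=2^h$ with $h\equiv 1\pmod 2$, let $$U=\left\{\left(x,y,x^q+y^{q^2},x^{q^2}+y^q+y^{q^2}\right): x,y\in\mathbb F_{q^4}\right\}\subseteq\mathbb F_{q^4}^4,$$ and let $\mathcal C$ be an $[8,4]_{q^4/q}$ code associated to $U$. Then the dual code $\mathcal C^\perp$ is equivalent to $\mathcal C$.
   Context: A code associated to $U$ is the $\mathbb F_{q^4}$-row space of the $4\times 8$ matrix whose columns are an $\mathbb F_q$-basis of $U$. The dual code is $\mathcal C^\perp=\{u\in\mathbb F_{q^4}^8: uv^\top=0\ \forall v\in\mathcal C\}$. Two codes $\mathcal C_1,\mathcal C_2\subseteq\mathbb F_{q^m}^n$ are (linearly) equivalent if $\mathcal C_2=\{vA: v\in\mathcal C_1\}$ for some $A\in\mathrm{GL}(n,q)$. *)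

theory Defs
  imports "HOL-Analysis.Analysis"
begin

definition subfield_q :: "nat \<Rightarrow> 'a::field set" where
  "subfield_q q = {x. x ^ q = x}"

definition U_set :: "nat \<Rightarrow> ('a::field ^ 4) set" where
  "U_set q = {vector [x, y, x ^ q + y ^ (q^2), x ^ (q^2) + y ^ q + y ^ (q^2)] | x y. True}"

definition is_Fq_basis :: "nat \<Rightarrow> ('n::finite \<Rightarrow> 'a::field ^ 'm) \<Rightarrow> ('a ^ 'm) set \<Rightarrow> bool" where
  "is_Fq_basis q b S \<longleftrightarrow>
     (\<forall>c. (\<forall>i. c i \<in> subfield_q q) \<and> (\<Sum>i\<in>UNIV. c i *s b i) = 0 \<longrightarrow> (\<forall>i. c i = 0)) \<and>
     S = {(\<Sum>i\<in>UNIV. c i *s b i) | c. \<forall>i. c i \<in> subfield_q q}"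

text \<open>Code associated: F_{q^m}-row space of the matrix whose j-th column is b j.\<close>
definition assoc_code :: "('n::finite \<Rightarrow> 'a::field ^ 'm::finite) \<Rightarrow> ('a ^ 'n) set" where
  "assoc_code b = {(\<chi> j. \<Sum>k\<in>UNIV. u $ k * (b j) $ k) | u. True}"

definition dual_code :: "('a::field ^ 'n::finite) set \<Rightarrow> ('a ^ 'n) set" where
  "dual_code C = {u. \<forall>v\<in>C. (\<Sum>i\<in>UNIV. u $ i * v $ i) = 0}"

definition row_mult :: "'a::field ^ 'n::finite \<Rightarrow> 'a ^ 'n ^ 'n \<Rightarrow> 'a ^ 'n" where
  "row_mult v A = (\<chi> j. \<Sum>i\<in>UNIV. v $ i * A $ i $ j)"

definition codes_equiv :: "nat \<Rightarrow> ('a::field ^ 'n::finite) set \<Rightarrow> ('a ^ 'n) set \<Rightarrow> bool" where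
  "codes_equiv q C1 C2 \<longleftrightarrow>
     (\<exists>A B :: 'a ^ 'n ^ 'n. (\<forall>i j. A $ i $ j \<in> subfield_q q) \<and> (\<forall>i j. B $ i $ j \<in> subfield_q q) \<and>
        A ** B = mat 1 \<and> B ** A = mat 1 \<and> C2 = (\<lambda>v. row_mult v A) ` C1)"

end

theory Submission
  imports Defs "HOL-Computational_Algebra.Polynomial"
begin

(* Write b_j = phi(z_j), where phi : F^2 -> F^4, F = F_{q^4}, is the parametrisation of U; then
   (z_j) is an F_q-basis of F^2. In the conjugate coordinates V(z) = (X, X^q, X^q^2, X^q^3, Y, ...,
   Y^q^3) the map phi is a 0/1 matrix C, so the code is generated by C M, where M has the columns
   V(z_j). If (z'_j) is the dual basis of (z_j) for the trace form Tr(X X' + Y Y'), the matrix M'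
   with columns V(z'_j) satisfies M'^T M = 1, so the dual code is generated by D M', where the rows
   of D span the kernel of C. In characteristic 2 one finds D V(w) = phi(L w) for an F_q-linear
   involution L of F^2: the dual code is again associated with an F_q-basis of U, and codes
   associated with two F_q-bases of the same space are equivalent. *)

section \<open>Frobenius maps and the trace of a finite field\<close>

lemma prime_CHAR_finite_field: "prime CHAR('a::{field,finite})"
  by (intro prime_CHAR_semidom finite_imp_CHAR_pos) simp

lemma CHAR_power_pos: "0 < CHAR('a::{field,finite}) ^ h"
  using prime_gt_0_nat[OF prime_CHAR_finite_field[where 'a='a]] by simp

lemma CHAR_power_ge_2: "0 < h \<Longrightarrow> 2 \<le> CHAR('a::{field,finite}) ^ h"
  using prime_ge_2_nat[OF prime_CHAR_finite_field[where 'a='a]] self_le_power[of "CHAR('a)" h]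
  by simp

lemma of_nat_CARD_eq_0: "of_nat CARD('a::{field,finite}) = (0::'a)"
proof -
  have "(\<Sum>x\<in>UNIV. x + 1) = (\<Sum>x\<in>(UNIV::'a set). x)"
    by (rule sum.reindex_bij_witness[of _ "\<lambda>x. x - 1" "\<lambda>x. x + 1"]) auto
  then show ?thesis
    by (simp add: sum.distrib)
qed

lemma CHAR_eq_2_if_CARD_power_2:
  assumes "CARD('a::{field,finite}) = 2 ^ n"
  shows "CHAR('a) = 2"
proof -
  have "of_nat (2 ^ n) = (0::'a)"
    using of_nat_CARD_eq_0[where 'a='a] assms by simp
  then have "CHAR('a) dvd 2 ^ n"
    by (simp only: of_nat_eq_0_iff_char_dvd)
  then have "CHAR('a) dvd 2"
    using prime_CHAR_finite_field[where 'a='a] prime_dvd_power two_is_prime_nat by blast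
  then show ?thesis
    using prime_CHAR_finite_field[where 'a='a] by (simp add: primes_dvd_imp_eq)
qed

lemma power_CARD_eq_self: "(x::'a::{field,finite}) ^ CARD('a) = x"
proof (cases "x = 0")
  case False
  let ?N = "UNIV - {0::'a}"
  have "(\<Prod>y\<in>?N. x * y) = (\<Prod>y\<in>?N. y)"
    by (rule prod.reindex_bij_witness[of _ "\<lambda>y. y / x" "\<lambda>y. x * y"]) (use False in auto)
  then have "x ^ card ?N * (\<Prod>y\<in>?N. y) = 1 * (\<Prod>y\<in>?N. y)"
    by (simp add: prod.distrib)
  then have "x ^ (CARD('a) - 1) = 1"
    by (simp add: card_Diff_singleton)
  moreover have "CARD('a) = Suc (CARD('a) - 1)"
    by (simp add: finite_UNIV_card_ge_0)
  ultimately show ?thesis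
    by (metis power_Suc mult_1_right)
qed simp

definition frob :: "nat \<Rightarrow> nat \<Rightarrow> 'a::field \<Rightarrow> 'a" where
  "frob q k x = x ^ q ^ k"

lemma frob_0 [simp]: "frob q 0 x = x"
  by (simp add: frob_def)

lemma frob_frob: "frob q i (frob q j x) = frob q (i + j) x"
  by (simp add: frob_def power_add power_mult[symmetric] mult.commute)

lemma frob_mult: "frob q k (x * y) = frob q k x * frob q k y"
  by (simp add: frob_def power_mult_distrib)

lemma frob_add:
  assumes "q = CHAR('a::{field,finite}) ^ h"
  shows "frob q k (x + y :: 'a) = frob q k x + frob q k y"
  unfolding frob_def
  by (rule freshmans_dream'[OF prime_CHAR_finite_field]) (simp add: assms flip: power_mult)

lemma frob_sum:
  assumes "q = CHAR('a::{field,finite}) ^ h"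
  shows "frob q k (\<Sum>i\<in>A. f i :: 'a) = (\<Sum>i\<in>A. frob q k (f i))"
  unfolding frob_def
  by (rule freshmans_dream_sum'[OF prime_CHAR_finite_field]) (simp add: assms flip: power_mult)

lemma frob_minus:
  assumes "q = CHAR('a::{field,finite}) ^ h"
  shows "frob q k (- x :: 'a) = - frob q k x"
proof -
  have "frob q k (0::'a) = 0"
    using assms CHAR_power_pos[where 'a='a] by (simp add: frob_def)
  then show ?thesis
    using frob_add[OF assms, of k x "- x"] by (simp add: eq_neg_iff_add_eq_0 add.commute)
qed

lemma frob_diff:
  assumes "q = CHAR('a::{field,finite}) ^ h"
  shows "frob q k (x - y :: 'a) = frob q k x - frob q k y"
  using frob_add[OF assms, of k x "- y"] frob_minus[OF assms, of k y] by simp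

lemma frob_period:
  assumes "CARD('a::{field,finite}) = q ^ n"
  shows "frob q n (x::'a) = x"
  using power_CARD_eq_self[of x] by (simp add: frob_def assms)

lemma frob_add_period:
  assumes "CARD('a::{field,finite}) = q ^ n"
  shows "frob q (n + k) (x::'a) = frob q k x"
  using frob_frob[of q k n x] by (simp add: frob_period[OF assms] add.commute)

lemma frob_frob_4:
  assumes "CARD('a::{field,finite}) = q ^ 4"
  shows "frob q 1 (frob q 1 x) = frob q 2 (x::'a)" "frob q 1 (frob q 2 x) = frob q 3 x"
    "frob q 1 (frob q 3 x) = x" "frob q 2 (frob q 1 x) = frob q 3 x" "frob q 2 (frob q 2 x) = x"
    "frob q 2 (frob q 3 x) = frob q 1 x" "frob q 3 (frob q 1 x) = x"
    "frob q 3 (frob q 2 x) = frob q 1 x" "frob q 3 (frob q 3 x) = frob q 2 x"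
  using frob_add_period[OF assms, of 0 x] frob_add_period[OF assms, of 1 x]
    frob_add_period[OF assms, of 2 x]
  by (simp_all add: frob_frob del: One_nat_def)

lemma frob_subfield_q:
  assumes "c \<in> subfield_q q"
  shows "frob q k c = c"
proof (induction k)
  case (Suc k)
  have "frob q (Suc k) c = frob q k (frob q 1 c)"
    by (simp add: frob_frob)
  also have "frob q 1 c = c"
    using assms by (simp add: subfield_q_def frob_def)
  finally show ?case
    using Suc.IH by simp
qed simp

lemma subfield_q_iff_frob: "c \<in> subfield_q q \<longleftrightarrow> frob q 1 c = c"
  by (simp add: subfield_q_def frob_def)

lemma subfield_q_0_1 [simp]: "q > 0 \<Longrightarrow> 0 \<in> subfield_q q" "1 \<in> subfield_q q"
  by (simp_all add: subfield_q_def)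

lemma subfield_q_diff:
  assumes "q = CHAR('a::{field,finite}) ^ h" "(a::'a) \<in> subfield_q q" "b \<in> subfield_q q"
  shows "a - b \<in> subfield_q q"
  using assms(2,3) by (simp add: subfield_q_iff_frob frob_diff[OF assms(1)])

lemma subfield_q_mult:
  "a \<in> subfield_q q \<Longrightarrow> b \<in> subfield_q q \<Longrightarrow> a * b \<in> subfield_q q"
  by (simp add: subfield_q_iff_frob frob_mult)

lemma subfield_q_sum:
  assumes "q = CHAR('a::{field,finite}) ^ h" "\<And>i. i \<in> A \<Longrightarrow> f i \<in> subfield_q q"
  shows "(\<Sum>i\<in>A. f i :: 'a) \<in> subfield_q q"
  using assms(2) by (simp add: subfield_q_iff_frob frob_sum[OF assms(1)])

lemma frob_sum_scale:
  assumes "q = CHAR('a::{field,finite}) ^ h" "\<And>i. c i \<in> subfield_q q"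
  shows "frob q k (\<Sum>i\<in>A. c i * x i :: 'a) = (\<Sum>i\<in>A. c i * frob q k (x i))"
  by (simp add: frob_sum[OF assms(1)] frob_mult frob_subfield_q[OF assms(2)])

definition field_trace :: "nat \<Rightarrow> nat \<Rightarrow> 'a::field \<Rightarrow> 'a" where
  "field_trace q n x = (\<Sum>k<n. frob q k x)"

lemma field_trace_in_subfield_q:
  assumes "q = CHAR('a::{field,finite}) ^ h" "CARD('a) = q ^ n"
  shows "field_trace q n (x::'a) \<in> subfield_q q"
proof -
  have "frob q 1 (field_trace q n x) = (\<Sum>k<n. frob q (Suc k) x)"
    by (simp add: field_trace_def frob_sum[OF assms(1)] frob_frob)
  also have "\<dots> = (\<Sum>k<Suc n. frob q k x) - frob q 0 x"
    by (subst sum.lessThan_Suc_shift) simp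
  also have "\<dots> = field_trace q n x"
    unfolding field_trace_def sum.lessThan_Suc frob_period[OF assms(2)] by simp
  finally show ?thesis
    by (simp add: subfield_q_iff_frob)
qed

lemma field_trace_sum:
  assumes "q = CHAR('a::{field,finite}) ^ h"
  shows "field_trace q n (\<Sum>i\<in>A. f i :: 'a) = (\<Sum>i\<in>A. field_trace q n (f i))"
  unfolding field_trace_def frob_sum[OF assms] by (rule sum.swap)

lemma field_trace_diff:
  assumes "q = CHAR('a::{field,finite}) ^ h"
  shows "field_trace q n (x - y :: 'a) = field_trace q n x - field_trace q n y"
  by (simp add: field_trace_def frob_diff[OF assms] sum_subtractf)

lemma field_trace_scale:
  assumes "c \<in> subfield_q q"
  shows "field_trace q n (c * x) = c * field_trace q n x"
  by (simp add: field_trace_def frob_mult frob_subfield_q[OF assms] sum_distrib_left)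

lemma field_trace_not_identically_zero:
  assumes "CARD('a::{field,finite}) = q ^ n" "n > 0" "q \<ge> 2"
  shows "\<exists>t::'a. field_trace q n t \<noteq> 0"
proof (rule ccontr)
  assume "\<not> ?thesis"
  then have roots: "{t::'a. poly (\<Sum>k<n. monom 1 (q ^ k)) t = 0} = UNIV"
    by (simp add: field_trace_def frob_def poly_sum poly_monom)
  have "coeff (\<Sum>k<n. monom (1::'a) (q ^ k)) 1 = (\<Sum>k<n. if k = 0 then 1 else 0)"
    unfolding coeff_sum using assms(3) by (intro sum.cong refl) (auto simp: coeff_monom)
  also have "\<dots> = 1"
    using assms(2) by simp
  finally have "(\<Sum>k<n. monom (1::'a) (q ^ k)) \<noteq> 0"
    by auto
  then have "CARD('a) \<le> degree (\<Sum>k<n. monom (1::'a) (q ^ k))"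
    using card_poly_roots_bound roots by metis
  also have "\<dots> \<le> q ^ (n - 1)"
    using assms(2,3) by (intro degree_sum_le) (simp_all add: degree_monom_eq power_increasing)
  also have "\<dots> < q ^ n"
    using assms(2,3) by (simp add: power_strict_increasing)
  finally show False
    using assms(1) by simp
qed

section \<open>\<open>F\<^sub>q\<close>-bases\<close>

lemma is_Fq_basis_independent:
  "is_Fq_basis q b S \<Longrightarrow> \<forall>i. c i \<in> subfield_q q \<Longrightarrow> (\<Sum>i\<in>UNIV. c i *s b i) = 0 \<Longrightarrow> c i = 0"
  unfolding is_Fq_basis_def by blast

lemma is_Fq_basis_spanning:
  assumes "is_Fq_basis q b S" "v \<in> S"
  obtains c where "\<forall>i. c i \<in> subfield_q q" "v = (\<Sum>i\<in>UNIV. c i *s b i)"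
  using assms unfolding is_Fq_basis_def by blast

lemma is_Fq_basis_mem:
  assumes "q = CHAR('a::{field,finite}) ^ h" "is_Fq_basis q (b :: 'n::finite \<Rightarrow> 'a ^ 'm) S"
  shows "b j \<in> S"
proof -
  have "0 < q"
    using assms(1) CHAR_power_pos[where 'a='a] by simp
  then have K: "\<forall>i. (if i = j then 1 else 0 :: 'a) \<in> subfield_q q"
    by simp
  have e: "b j = (\<Sum>i\<in>UNIV. (if i = j then 1 else 0) *s b i)"
    by (simp add: if_distrib[of "\<lambda>c. c *s _"] cong: if_cong)
  have "S = {\<Sum>i\<in>UNIV. c i *s b i | c. \<forall>i. c i \<in> subfield_q q}"
    using assms(2) unfolding is_Fq_basis_def by blast
  then show ?thesis
    by (simp only:) (intro CollectI exI[of _ "\<lambda>i. if i = j then 1 else 0"] conjI e K)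
qed

lemma is_Fq_basis_linear_image_iff:
  fixes f :: "'a::field ^ 'm \<Rightarrow> 'a ^ 'k" and z :: "'n::finite \<Rightarrow> 'a ^ 'm"
  assumes lin: "\<And>c (v :: 'n \<Rightarrow> 'a ^ 'm). (\<And>i. c i \<in> subfield_q q) \<Longrightarrow>
      f (\<Sum>i\<in>UNIV. c i *s v i) = (\<Sum>i\<in>UNIV. c i *s f (v i))"
    and "inj f" and "0 < q"
  shows "is_Fq_basis q (\<lambda>i. f (z i)) (f ` S) \<longleftrightarrow> is_Fq_basis q z S"
proof -
  have "f 0 = f (\<Sum>i\<in>UNIV. 0 *s z i)"
    by simp
  also have "\<dots> = (\<Sum>i\<in>UNIV. 0 *s f (z i))"
    by (rule lin) (simp add: assms(3))
  finally have "f 0 = 0"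
    by simp
  have indep: "(\<Sum>i\<in>UNIV. c i *s f (z i)) = 0 \<longleftrightarrow> (\<Sum>i\<in>UNIV. c i *s z i) = 0"
    if "\<forall>i. c i \<in> subfield_q q" for c
  proof -
    have "f (\<Sum>i\<in>UNIV. c i *s z i) = (\<Sum>i\<in>UNIV. c i *s f (z i))"
      using that by (intro lin) simp
    then show ?thesis
      using \<open>f 0 = 0\<close> \<open>inj f\<close> by (metis injD)
  qed
  have "{\<Sum>i\<in>UNIV. c i *s f (z i) | c. \<forall>i. c i \<in> subfield_q q}
      = f ` {\<Sum>i\<in>UNIV. c i *s z i | c. \<forall>i. c i \<in> subfield_q q}"
    unfolding setcompr_eq_image image_image by (rule image_cong) (simp_all add: lin)
  then have "f ` S = {\<Sum>i\<in>UNIV. c i *s f (z i) | c. \<forall>i. c i \<in> subfield_q q}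
      \<longleftrightarrow> S = {\<Sum>i\<in>UNIV. c i *s z i | c. \<forall>i. c i \<in> subfield_q q}"
    using \<open>inj f\<close> by (simp add: inj_image_eq_iff)
  with indep show ?thesis
    unfolding is_Fq_basis_def by (simp add: imp_conjL)
qed

lemma is_Fq_basis_coordinates:
  assumes "is_Fq_basis q b S" "\<And>j. b' j \<in> S"
  obtains A :: "'a::field ^ 'n::finite ^ 'n"
  where "\<forall>i j. A $ i $ j \<in> subfield_q q" "\<And>j. b' j = (\<Sum>i\<in>UNIV. A $ i $ j *s b i)"
proof -
  have "\<exists>c. (\<forall>i. c i \<in> subfield_q q) \<and> b' j = (\<Sum>i\<in>UNIV. c i *s b i)" for j
  proof -
    obtain c where "\<forall>i. c i \<in> subfield_q q" "b' j = (\<Sum>i\<in>UNIV. c i *s b i)"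
      by (rule is_Fq_basis_spanning[OF assms(1) assms(2)[of j]])
    then show ?thesis
      by blast
  qed
  then have "\<forall>j. \<exists>c. (\<forall>i. c i \<in> subfield_q q) \<and> b' j = (\<Sum>i\<in>UNIV. c i *s b i)"
    by blast
  from choice[OF this] obtain c
    where "\<forall>j. (\<forall>i. c j i \<in> subfield_q q) \<and> b' j = (\<Sum>i\<in>UNIV. c j i *s b i)" ..
  then show ?thesis
    by (intro that[of "\<chi> i j. c j i"]) simp_all
qed

lemma is_Fq_basis_transition_inverse:
  fixes b b' :: "'n::finite \<Rightarrow> 'a::{field,finite} ^ 'm" and A B :: "'a ^ 'n ^ 'n"
  assumes q: "q = CHAR('a) ^ h" and basis: "is_Fq_basis q b S"
    and A: "\<forall>i j. A $ i $ j \<in> subfield_q q" "\<And>j. b' j = (\<Sum>i\<in>UNIV. A $ i $ j *s b i)"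
    and B: "\<forall>i j. B $ i $ j \<in> subfield_q q" "\<And>j. b j = (\<Sum>i\<in>UNIV. B $ i $ j *s b' i)"
  shows "A ** B = mat 1"
proof -
  have "(A ** B) $ k $ j = mat 1 $ k $ j" for k j
  proof -
    define e where "e k' = (A ** B) $ k' $ j - mat 1 $ k' $ j" for k'
    have "0 < q"
      using q CHAR_power_pos[where 'a='a] by simp
    then have K: "\<forall>k'. e k' \<in> subfield_q q"
      unfolding e_def matrix_matrix_mult_def mat_def using A(1) B(1)
      by (auto intro!: subfield_q_diff[OF q] subfield_q_sum[OF q] subfield_q_mult)
    have "(\<Sum>k'\<in>UNIV. (A ** B) $ k' $ j *s b k')
        = (\<Sum>k'\<in>UNIV. \<Sum>i\<in>UNIV. B $ i $ j *s (A $ k' $ i *s b k'))"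
      by (simp add: matrix_matrix_mult_def vec.scale_sum_left vector_smult_assoc mult.commute)
    also have "\<dots> = (\<Sum>i\<in>UNIV. \<Sum>k'\<in>UNIV. B $ i $ j *s (A $ k' $ i *s b k'))"
      by (rule sum.swap)
    also have "\<dots> = b j"
      by (simp add: B(2)[of j] A(2) vec.scale_sum_right)
    finally have "(\<Sum>k'\<in>UNIV. e k' *s b k') = 0"
      by (simp add: e_def mat_def vec.scale_left_diff_distrib sum_subtractf
          if_distrib[of "\<lambda>c. c *s _"] cong: if_cong)
    then show ?thesis
      using is_Fq_basis_independent[OF basis K] by (simp add: e_def)
  qed
  then show ?thesis
    by (simp add: vec_eq_iff)
qed

lemma is_Fq_basis_change:
  fixes b b' :: "'n::finite \<Rightarrow> 'a::{field,finite} ^ 'm"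
  assumes q: "q = CHAR('a) ^ h" and basis: "is_Fq_basis q b S" and basis': "is_Fq_basis q b' S"
  obtains A B :: "'a ^ 'n ^ 'n"
  where "\<forall>i j. A $ i $ j \<in> subfield_q q" "\<forall>i j. B $ i $ j \<in> subfield_q q"
    and "A ** B = mat 1" "B ** A = mat 1" "\<And>j. b' j = (\<Sum>i\<in>UNIV. A $ i $ j *s b i)"
proof -
  have mem: "\<And>j. b j \<in> S" "\<And>j. b' j \<in> S"
    by (rule is_Fq_basis_mem[OF q basis], rule is_Fq_basis_mem[OF q basis'])
  obtain A where A: "\<forall>i j. A $ i $ j \<in> subfield_q q" "\<And>j. b' j = (\<Sum>i\<in>UNIV. A $ i $ j *s b i)"
    using is_Fq_basis_coordinates[where b' = b', OF basis mem(2)] by blast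
  obtain B where B: "\<forall>i j. B $ i $ j \<in> subfield_q q" "\<And>j. b j = (\<Sum>i\<in>UNIV. B $ i $ j *s b' i)"
    using is_Fq_basis_coordinates[where b' = b, OF basis' mem(1)] by blast
  have AB: "A ** B = mat 1"
    by (rule is_Fq_basis_transition_inverse[OF q basis A B])
  then have "B ** A = mat 1"
    using matrix_left_right_inverse by blast
  then show ?thesis
    by (rule that[OF A(1) B(1) AB _ A(2)])
qed

section \<open>Dual bases for the trace form\<close>

definition trace_form :: "nat \<Rightarrow> nat \<Rightarrow> 'a::field ^ 'm \<Rightarrow> 'a ^ 'm \<Rightarrow> 'a" where
  "trace_form q n v w = field_trace q n (\<Sum>k\<in>UNIV. v $ k * w $ k)"

lemma trace_form_commute: "trace_form q n v w = trace_form q n w v"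
  by (simp add: trace_form_def mult.commute)

lemma trace_form_diff_right:
  assumes "q = CHAR('a::{field,finite}) ^ h"
  shows "trace_form q n v (w - w') = trace_form q n v w - trace_form q n (v :: 'a ^ 'm) w'"
  by (simp add: trace_form_def right_diff_distrib sum_subtractf field_trace_diff[OF assms])

lemma trace_form_sum_right:
  assumes "q = CHAR('a::{field,finite}) ^ h" "\<And>i. c i \<in> subfield_q q"
  shows "trace_form q n v (\<Sum>i\<in>A. c i *s w i) = (\<Sum>i\<in>A. c i * trace_form q n (v :: 'a ^ 'm) (w i))"
proof -
  have "(\<Sum>k\<in>UNIV. v $ k * (\<Sum>i\<in>A. c i *s w i) $ k) = (\<Sum>i\<in>A. c i * (\<Sum>k\<in>UNIV. v $ k * w i $ k))"
    by (simp add: sum_component sum_distrib_left mult.left_commute sum.swap[of _ UNIV])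
  then show ?thesis
    by (simp add: trace_form_def field_trace_sum[OF assms(1)] field_trace_scale[OF assms(2)])
qed

lemma trace_form_in_subfield_q:
  assumes "q = CHAR('a::{field,finite}) ^ h" "CARD('a) = q ^ n"
  shows "trace_form q n v (w :: 'a ^ 'm) \<in> subfield_q q"
  unfolding trace_form_def by (rule field_trace_in_subfield_q[OF assms])

lemma trace_form_nondegenerate:
  assumes "CARD('a::{field,finite}) = q ^ n" "0 < n" "2 \<le> q"
    and "\<And>v. trace_form q n v (w :: 'a ^ 'm) = 0"
  shows "w = 0"
proof (rule ccontr)
  assume "w \<noteq> 0"
  then obtain k where "w $ k \<noteq> 0"
    by (auto simp: vec_eq_iff)
  obtain t :: 'a where "field_trace q n t \<noteq> 0"
    using field_trace_not_identically_zero[OF assms(1-3)] by blast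
  moreover have "(\<Sum>j\<in>UNIV. axis k (t / w $ k) $ j * w $ j) = t"
    using \<open>w $ k \<noteq> 0\<close> by (simp add: axis_def if_distrib[of "\<lambda>x. x * _"] cong: if_cong)
  ultimately show False
    using assms(4)[of "axis k (t / w $ k)"] by (simp add: trace_form_def)
qed

lemma trace_form_nondegenerate_on_basis:
  assumes q: "q = CHAR('a::{field,finite}) ^ h" "0 < h" and card: "CARD('a) = q ^ n" "0 < n"
    and basis: "is_Fq_basis q z UNIV" and orth: "\<And>i. trace_form q n (z i) (w :: 'a ^ 'm) = 0"
  shows "w = 0"
proof (rule trace_form_nondegenerate[OF card])
  show "2 \<le> q"
    using CHAR_power_ge_2[OF q(2)] q(1) by simp
next
  fix v
  obtain c where c: "\<forall>i. c i \<in> subfield_q q" "v = (\<Sum>i\<in>UNIV. c i *s z i)"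
    using is_Fq_basis_spanning[OF basis] by blast
  have "trace_form q n v w = (\<Sum>i\<in>UNIV. c i * trace_form q n (z i) w)"
    unfolding c(2) trace_form_commute[of q n _ w] using trace_form_sum_right[OF q(1)] c(1) by blast
  then show "trace_form q n v w = 0"
    by (simp add: orth trace_form_commute[of q n w])
qed

lemma trace_dual_basis_exists:
  fixes z :: "'i::finite \<Rightarrow> 'a::{field,finite} ^ 'm"
  assumes q: "q = CHAR('a) ^ h" "0 < h" and card: "CARD('a) = q ^ n" "0 < n"
    and basis: "is_Fq_basis q z UNIV"
  obtains z' where "\<And>i j. trace_form q n (z i) (z' j) = (if i = j then 1 else 0)"
proof -
  define Kn where "Kn = {c :: 'i \<Rightarrow> 'a. \<forall>i. c i \<in> subfield_q q}"
  define G where "G c = (\<lambda>i. trace_form q n (z i) (\<Sum>k\<in>UNIV. c k *s z k))" for c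
  have "G ` Kn \<subseteq> Kn"
    by (auto simp: Kn_def G_def trace_form_in_subfield_q[OF q(1) card(1)])
  moreover have "inj_on G Kn"
  proof (rule inj_onI)
    fix c d assume "c \<in> Kn" "d \<in> Kn" and eq: "G c = G d"
    then have K: "\<forall>k. c k - d k \<in> subfield_q q"
      unfolding Kn_def using subfield_q_diff[OF q(1)] by blast
    have "trace_form q n (z i) ((\<Sum>k\<in>UNIV. c k *s z k) - (\<Sum>k\<in>UNIV. d k *s z k)) = 0" for i
      using fun_cong[OF eq, of i] unfolding G_def trace_form_diff_right[OF q(1)] by simp
    then have "(\<Sum>k\<in>UNIV. c k *s z k) - (\<Sum>k\<in>UNIV. d k *s z k) = 0"
      by (rule trace_form_nondegenerate_on_basis[OF q card basis])
    then have "(\<Sum>k\<in>UNIV. (c k - d k) *s z k) = 0"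
      by (simp add: vec.scale_left_diff_distrib sum_subtractf)
    then show "c = d"
      using is_Fq_basis_independent[OF basis K] by (simp add: fun_eq_iff)
  qed
  ultimately have "G ` Kn = Kn"
    by (intro endo_inj_surj) simp_all
  moreover have "(\<lambda>i. if i = j then 1 else 0) \<in> Kn" for j
    using q(1) CHAR_power_pos[where 'a='a] by (simp add: Kn_def)
  ultimately have "\<exists>c. G c = (\<lambda>i. if i = j then 1 else 0)" for j
    by (metis imageE)
  then obtain c where c: "\<And>j. G (c j) = (\<lambda>i. if i = j then 1 else 0)"
    by metis
  show ?thesis
  proof (rule that)
    fix i j
    show "trace_form q n (z i) (\<Sum>k\<in>UNIV. c j k *s z k) = (if i = j then 1 else 0)"
      using fun_cong[OF c[of j], of i] unfolding G_def by simp
  qed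
qed

lemma trace_dual_basis_is_basis:
  fixes z z' :: "'i::finite \<Rightarrow> 'a::{field,finite} ^ 'm"
  assumes q: "q = CHAR('a) ^ h" "0 < h" and card: "CARD('a) = q ^ n" "0 < n"
    and basis: "is_Fq_basis q z UNIV"
    and dual: "\<And>i j. trace_form q n (z i) (z' j) = (if i = j then 1 else 0)"
  shows "is_Fq_basis q z' UNIV"
proof -
  have coeff: "trace_form q n (z i) (\<Sum>j\<in>UNIV. c j *s z' j) = c i"
    if "\<And>j. c j \<in> subfield_q q" for c i
    by (simp add: trace_form_sum_right[OF q(1) that] dual if_distrib[of "\<lambda>x. _ * x"] cong: if_cong)
  have "w \<in> {\<Sum>j\<in>UNIV. c j *s z' j | c. \<forall>j. c j \<in> subfield_q q}" for w
  proof -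
    have K: "\<And>j. trace_form q n (z j) w \<in> subfield_q q"
      by (rule trace_form_in_subfield_q[OF q(1) card(1)])
    have "w - (\<Sum>j\<in>UNIV. trace_form q n (z j) w *s z' j) = 0"
      by (rule trace_form_nondegenerate_on_basis[OF q card basis])
        (simp add: trace_form_diff_right[OF q(1)] coeff[OF K])
    then show ?thesis
      using K by force
  qed
  then have "UNIV = {\<Sum>j\<in>UNIV. c j *s z' j | c. \<forall>j. c j \<in> subfield_q q}"
    by blast
  moreover have "\<forall>i. c i = 0"
    if "\<forall>j. c j \<in> subfield_q q" "(\<Sum>j\<in>UNIV. c j *s z' j) = 0" for c
  proof
    fix i
    have "c i = trace_form q n (z i) 0"
      using coeff[of c i] that by simp
    then show "c i = 0"
      using trace_form_diff_right[OF q(1), where w=0 and w'=0] by simp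
  qed
  ultimately show ?thesis
    unfolding is_Fq_basis_def by blast
qed

section \<open>Generator matrices and dual codes\<close>

definition generator_matrix :: "('n \<Rightarrow> 'a ^ 'm) \<Rightarrow> 'a ^ 'n ^ 'm" where
  "generator_matrix b = (\<chi> k j. b j $ k)"

lemma assoc_code_eq_row_space:
  "assoc_code b = range (\<lambda>u. u v* generator_matrix (b :: 'n::finite \<Rightarrow> 'a::field ^ 'm::finite))"
  by (auto simp: assoc_code_def generator_matrix_def vector_matrix_mult_def)

lemma row_mult_eq_vector_matrix_mult: "row_mult v A = v v* A"
  by (simp add: row_mult_def vector_matrix_mult_def)

lemma generator_matrix_change:
  assumes "\<And>j. b' j = (\<Sum>i\<in>UNIV. A $ i $ j *s b i)"
  shows "generator_matrix b' = generator_matrix b ** (A :: 'a::field ^ 'n::finite ^ 'n)"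
  by (simp add: assms generator_matrix_def matrix_matrix_mult_def sum_component mult.commute)

lemma codes_equiv_if_Fq_bases:
  fixes b b' :: "'n::finite \<Rightarrow> 'a::{field,finite} ^ 'm::finite"
  assumes "q = CHAR('a) ^ h" "is_Fq_basis q b S" "is_Fq_basis q b' S"
  shows "codes_equiv q (assoc_code b) (assoc_code b')"
proof -
  obtain A B :: "'a ^ 'n ^ 'n"
    where AB: "\<forall>i j. A $ i $ j \<in> subfield_q q" "\<forall>i j. B $ i $ j \<in> subfield_q q"
      "A ** B = mat 1" "B ** A = mat 1" and b': "\<And>j. b' j = (\<Sum>i\<in>UNIV. A $ i $ j *s b i)"
    using is_Fq_basis_change[OF assms] by blast
  have "assoc_code b' = (\<lambda>v. row_mult v A) ` assoc_code b"
    unfolding assoc_code_eq_row_space generator_matrix_change[OF b'] row_mult_eq_vector_matrix_mult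
    by (simp add: image_image vector_matrix_mul_assoc)
  with AB show ?thesis
    unfolding codes_equiv_def by blast
qed

lemma dual_code_row_space:
  "dual_code (range (\<lambda>u. u v* G)) = {w. G *v w = (0 :: 'a::field ^ 'k::finite)}"
proof -
  have pairing: "(\<Sum>i\<in>UNIV. w $ i * (u v* G) $ i) = (\<Sum>k\<in>UNIV. u $ k * (G *v w) $ k)" for u w
  proof -
    have "(\<Sum>i\<in>UNIV. w $ i * (u v* G) $ i) = (\<Sum>i\<in>UNIV. \<Sum>k\<in>UNIV. u $ k * (G $ k $ i * w $ i))"
      by (simp add: vector_matrix_mult_def sum_distrib_left mult_ac)
    also have "\<dots> = (\<Sum>k\<in>UNIV. \<Sum>i\<in>UNIV. u $ k * (G $ k $ i * w $ i))"
      by (rule sum.swap)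
    finally show ?thesis
      by (simp add: matrix_vector_mult_def sum_distrib_left)
  qed
  have "G *v w = 0" if "\<forall>u. (\<Sum>k\<in>UNIV. u $ k * (G *v w) $ k) = 0" for w
  proof -
    have "(G *v w) $ k = 0" for k
      using that[rule_format, of "axis k 1"] by (simp add: axis_def if_distrib[of "\<lambda>x. x * _"] cong: if_cong)
    then show ?thesis
      by (simp add: vec_eq_iff)
  qed
  then show ?thesis
    unfolding dual_code_def by (auto simp: pairing)
qed

lemma dual_code_row_space_factor:
  fixes P :: "'a::field ^ 'n::finite ^ 'k::finite" and Q :: "'a ^ 'n ^ 'l::finite"
    and M M' :: "'a ^ 'n ^ 'n"
  assumes inv: "transpose M' ** M = mat 1" and ker: "{m. P *v m = 0} = range (\<lambda>u. u v* Q)"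
  shows "dual_code (range (\<lambda>u. u v* (P ** M))) = range (\<lambda>u. u v* (Q ** M'))"
proof -
  have inv': "M ** transpose M' = mat 1"
    using inv matrix_left_right_inverse by blast
  have "(P ** M) *v w = 0 \<longleftrightarrow> (\<exists>u. w = u v* (Q ** M'))" for w
  proof -
    have "(P ** M) *v w = 0 \<longleftrightarrow> (\<exists>u. M *v w = u v* Q)"
      using ker by (auto simp: matrix_vector_mul_assoc[symmetric] set_eq_iff)
    also have "\<dots> \<longleftrightarrow> (\<exists>u. w = u v* (Q ** M'))"
    proof -
      have "M *v w = x \<longleftrightarrow> w = transpose M' *v x" for x
        by (metis inv inv' matrix_vector_mul_assoc matrix_vector_mul_lid)
      then show ?thesis
        by (simp add: vector_matrix_mul_assoc)
    qed
    finally show ?thesis .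
  qed
  then show ?thesis
    unfolding dual_code_row_space by auto
qed

section \<open>The space \<open>U\<close> is self-dual\<close>

lemma add_self_CHAR_2:
  assumes "CHAR('a::ring_1) = 2"
  shows "x + x = (0::'a)" "x + (x + y) = (y::'a)"
  using uminus_CHAR_2[OF assms, of x] by (metis add.right_inverse, metis add.assoc add.right_inverse add_0)

lemma exhaust_8:
  fixes s :: 8
  shows "s = 1 \<or> s = 2 \<or> s = 3 \<or> s = 4 \<or> s = 5 \<or> s = 6 \<or> s = 7 \<or> s = 8"
proof (induct s)
  case (of_int z)
  then have "z = 0 \<or> z = 1 \<or> z = 2 \<or> z = 3 \<or> z = 4 \<or> z = 5 \<or> z = 6 \<or> z = 7"
    by fastforce
  then show ?case
    by auto
qed

lemma forall_8: "(\<forall>s::8. P s) \<longleftrightarrow> P 1 \<and> P 2 \<and> P 3 \<and> P 4 \<and> P 5 \<and> P 6 \<and> P 7 \<and> P 8"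
  by (metis exhaust_8)

lemma sum_8: "sum f (UNIV::8 set) = f 1 + f 2 + f 3 + f 4 + f 5 + f 6 + f 7 + f 8"
proof -
  have U: "(UNIV::8 set) = {1, 2, 3, 4, 5, 6, 7, 8}"
    using exhaust_8 by auto
  show ?thesis
    unfolding U by (simp add: ac_simps)
qed

lemma vector_4_nth [simp]:
  "(vector [a1, a2, a3, a4] :: 'a::zero ^ 4) $ 1 = a1"
  "(vector [a1, a2, a3, a4] :: 'a ^ 4) $ 2 = a2"
  "(vector [a1, a2, a3, a4] :: 'a ^ 4) $ 3 = a3"
  "(vector [a1, a2, a3, a4] :: 'a ^ 4) $ 4 = a4"
  unfolding vector_def by simp_all

lemma vector_8_nth [simp]:
  "(vector [a1, a2, a3, a4, a5, a6, a7, a8] :: 'a::zero ^ 8) $ 1 = a1"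
  "(vector [a1, a2, a3, a4, a5, a6, a7, a8] :: 'a ^ 8) $ 2 = a2"
  "(vector [a1, a2, a3, a4, a5, a6, a7, a8] :: 'a ^ 8) $ 3 = a3"
  "(vector [a1, a2, a3, a4, a5, a6, a7, a8] :: 'a ^ 8) $ 4 = a4"
  "(vector [a1, a2, a3, a4, a5, a6, a7, a8] :: 'a ^ 8) $ 5 = a5"
  "(vector [a1, a2, a3, a4, a5, a6, a7, a8] :: 'a ^ 8) $ 6 = a6"
  "(vector [a1, a2, a3, a4, a5, a6, a7, a8] :: 'a ^ 8) $ 7 = a7"
  "(vector [a1, a2, a3, a4, a5, a6, a7, a8] :: 'a ^ 8) $ 8 = a8"
  unfolding vector_def by simp_all

definition U_param :: "nat \<Rightarrow> 'a::field ^ 2 \<Rightarrow> 'a ^ 4" where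
  "U_param q w = vector [w $ 1, w $ 2, frob q 1 (w $ 1) + frob q 2 (w $ 2),
     frob q 2 (w $ 1) + frob q 1 (w $ 2) + frob q 2 (w $ 2)]"

definition twist :: "nat \<Rightarrow> 'a::field ^ 2 \<Rightarrow> 'a ^ 2" where
  "twist q w = vector [frob q 2 (w $ 1) + frob q 1 (w $ 2) + frob q 3 (w $ 2),
     frob q 1 (w $ 1) + frob q 3 (w $ 1) + frob q 1 (w $ 2) + frob q 2 (w $ 2) + frob q 3 (w $ 2)]"

definition conj_vector :: "nat \<Rightarrow> 'a::field ^ 2 \<Rightarrow> 'a ^ 8" where
  "conj_vector q w = vector [w $ 1, frob q 1 (w $ 1), frob q 2 (w $ 1), frob q 3 (w $ 1),
     w $ 2, frob q 1 (w $ 2), frob q 2 (w $ 2), frob q 3 (w $ 2)]"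

definition U_matrix :: "'a::field ^ 8 ^ 4" where
  "U_matrix = vector [
     vector [1, 0, 0, 0, 0, 0, 0, 0],
     vector [0, 0, 0, 0, 1, 0, 0, 0],
     vector [0, 1, 0, 0, 0, 0, 1, 0],
     vector [0, 0, 1, 0, 0, 1, 1, 0]]"

(* The rows span the kernel of U_matrix in characteristic 2. The first two rows are the conjugate
   coordinates of the components of twist; the last two are then forced by those of U_param. *)
definition U_dual_matrix :: "'a::field ^ 8 ^ 4" where
  "U_dual_matrix = vector [
     vector [0, 0, 1, 0, 0, 1, 0, 1],
     vector [0, 1, 0, 1, 0, 1, 1, 1],
     vector [0, 1, 0, 0, 0, 1, 1, 1],
     vector [0, 1, 1, 1, 0, 0, 1, 1]]"

lemma U_set_eq_range_U_param: "U_set q = range (U_param q :: 'a::field ^ 2 \<Rightarrow> 'a ^ 4)"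
proof -
  have "vector [x, y, x ^ q + y ^ q\<^sup>2, x ^ q\<^sup>2 + y ^ q + y ^ q\<^sup>2] = U_param q (vector [x, y])" for x y :: 'a
    by (simp add: U_param_def frob_def)
  then have "U_set q \<subseteq> range (U_param q :: 'a ^ 2 \<Rightarrow> 'a ^ 4)"
    unfolding U_set_def by auto
  moreover have "range (U_param q :: 'a ^ 2 \<Rightarrow> 'a ^ 4) \<subseteq> U_set q"
    unfolding U_set_def by (auto simp: U_param_def frob_def)
  ultimately show ?thesis
    by blast
qed

lemma U_param_eq_U_matrix: "U_param q w = U_matrix *v conj_vector q w"
  by (simp add: vec_eq_iff forall_4 U_param_def U_matrix_def conj_vector_def matrix_vector_mult_def sum_8)

lemma inj_U_param: "inj (U_param q)"
proof (rule injI)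
  fix v w :: "'a::field ^ 2"
  assume "U_param q v = U_param q w"
  then have "U_param q v $ 1 = U_param q w $ 1" "U_param q v $ 2 = U_param q w $ 2"
    by simp_all
  then show "v = w"
    by (simp add: U_param_def vec_eq_iff forall_2)
qed

lemma twist_components:
  "twist q w $ 1 = frob q 2 (w $ 1) + frob q 1 (w $ 2) + frob q 3 (w $ 2)"
  "twist q w $ 2 = frob q 1 (w $ 1) + frob q 3 (w $ 1) + frob q 1 (w $ 2) + frob q 2 (w $ 2) + frob q 3 (w $ 2)"
  by (simp_all add: twist_def)

lemma matrix_vector_mult_sum_scale:
  "A *v (\<Sum>i\<in>I. c i *s x i) = (\<Sum>i\<in>I. c i *s (A *v x i :: 'a::field ^ 'm))"
  by (induction I rule: infinite_finite_induct)
    (simp_all add: matrix_vector_right_distrib vector_scalar_commute)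

lemma generator_matrix_matrix_vector_mult:
  "generator_matrix (\<lambda>j. A *v v j) = A ** generator_matrix (v :: 'n::finite \<Rightarrow> 'a::field ^ 'm::finite)"
  by (simp add: generator_matrix_def matrix_matrix_mult_def matrix_vector_mult_def)

lemma U_matrix_kernel:
  assumes char: "CHAR('a::field) = 2"
  shows "{m. U_matrix *v m = 0} = range (\<lambda>u. u v* (U_dual_matrix :: 'a ^ 8 ^ 4))"
proof (intro set_eqI iffI)
  have two_eq_0: "(2::'a) = 0"
    using of_nat_CHAR[where 'a='a] char by simp
  fix m :: "'a ^ 8"
  assume "m \<in> range (\<lambda>u. u v* U_dual_matrix)"
  then obtain u where "m = transpose U_dual_matrix *v u"
    by auto
  then have "U_matrix *v m = (U_matrix ** transpose U_dual_matrix) *v u"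
    by (simp only: matrix_vector_mul_assoc)
  moreover have "U_matrix ** transpose (U_dual_matrix :: 'a ^ 8 ^ 4) = 0"
    by (simp add: vec_eq_iff forall_4 matrix_matrix_mult_def transpose_def U_matrix_def
        U_dual_matrix_def sum_8 two_eq_0)
  ultimately show "m \<in> {m. U_matrix *v m = 0}"
    by simp
next
  fix m :: "'a ^ 8"
  assume "m \<in> {m. U_matrix *v m = 0}"
  then have "m $ 1 = 0" "m $ 5 = 0" "m $ 2 + m $ 7 = 0" "m $ 3 + m $ 6 + m $ 7 = 0"
    by (simp_all add: vec_eq_iff forall_4 U_matrix_def matrix_vector_mult_def sum_8)
  then have m: "m $ 1 = 0" "m $ 5 = 0" "m $ 2 = m $ 7" "m $ 3 = m $ 6 + m $ 7"
    using add_self_CHAR_2[OF char] by (metis add.assoc add_0)+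
  have "m = vector [m $ 7 + m $ 8, m $ 4 + m $ 6 + m $ 8, m $ 4 + m $ 7, m $ 6 + m $ 8] v* U_dual_matrix"
    by (simp add: vec_eq_iff forall_8 vector_matrix_mult_def sum_4 U_dual_matrix_def m
        add_self_CHAR_2[OF char] add_ac)
  then show "m \<in> range (\<lambda>u. u v* U_dual_matrix)"
    by blast
qed

context
  fixes q h :: nat
  assumes char: "CHAR('a::{field,finite}) = 2" and q: "q = 2 ^ h" and card: "CARD('a) = q ^ 4"
begin

private lemma q_char: "q = CHAR('a) ^ h"
  using char q by simp

private lemma q_pos: "0 < q"
  using q by simp

private lemma h_pos: "0 < h"
proof (rule ccontr)
  assume "\<not> 0 < h"
  then have "CARD('a) = 1"
    using card q by simp
  moreover have "card {0, 1 :: 'a} \<le> CARD('a)"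
    by (rule card_mono) simp_all
  ultimately show False
    by simp
qed

(* One_nat_def would turn frob q 1 into frob q (Suc 0), which frob_frob_4 no longer matches. *)
private lemmas frob_simps = frob_add[OF q_char] frob_frob_4[OF card] add_self_CHAR_2[OF char]

lemma U_param_twist: "U_param q (twist q w) = U_dual_matrix *v conj_vector q (w :: 'a ^ 2)"
proof -
  have "frob q 1 (twist q w $ 1) + frob q 2 (twist q w $ 2)
      = frob q 1 (w $ 1) + frob q 1 (w $ 2) + frob q 2 (w $ 2) + frob q 3 (w $ 2)"
    by (simp add: twist_components frob_simps add_ac del: One_nat_def)
  moreover have "frob q 2 (twist q w $ 1) + frob q 1 (twist q w $ 2) + frob q 2 (twist q w $ 2)
      = frob q 1 (w $ 1) + frob q 2 (w $ 1) + frob q 3 (w $ 1) + frob q 2 (w $ 2) + frob q 3 (w $ 2)"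
    by (simp add: twist_components frob_simps add_ac del: One_nat_def)
  ultimately show ?thesis
    by (simp add: vec_eq_iff forall_4 U_param_def twist_components U_dual_matrix_def conj_vector_def
        matrix_vector_mult_def sum_8 del: One_nat_def)
qed

lemma twist_twist: "twist q (twist q w) = (w :: 'a ^ 2)"
  by (simp add: vec_eq_iff forall_2 twist_components frob_simps add_ac del: One_nat_def)

lemma conj_vector_sum_scale:
  assumes "\<And>i. c i \<in> subfield_q q"
  shows "conj_vector q (\<Sum>i\<in>A. c i *s v i) = (\<Sum>i\<in>A. c i *s conj_vector q (v i :: 'a ^ 2))"
  by (simp add: vec_eq_iff forall_8 conj_vector_def sum_component frob_sum_scale[OF q_char assms])

lemma twist_sum_scale:
  assumes "\<And>i. c i \<in> subfield_q q"
  shows "twist q (\<Sum>i\<in>A. c i *s v i) = (\<Sum>i\<in>A. c i *s twist q (v i :: 'a ^ 2))"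
  by (simp add: vec_eq_iff forall_2 twist_components sum_component frob_sum_scale[OF q_char assms]
      sum.distrib distrib_left)

lemma U_param_sum_scale:
  assumes "\<And>i. c i \<in> subfield_q q"
  shows "U_param q (\<Sum>i\<in>A. c i *s v i) = (\<Sum>i\<in>A. c i *s U_param q (v i :: 'a ^ 2))"
  by (simp add: U_param_eq_U_matrix conj_vector_sum_scale[OF assms] matrix_vector_mult_sum_scale)

lemma is_Fq_basis_twist_iff:
  "is_Fq_basis q (\<lambda>j. twist q (z j)) UNIV \<longleftrightarrow> is_Fq_basis q (z :: 'n::finite \<Rightarrow> 'a ^ 2) UNIV"
proof -
  have lin: "twist q (\<Sum>i\<in>UNIV. c i *s v i) = (\<Sum>i\<in>UNIV. c i *s twist q (v i))"
    if "\<And>i. c i \<in> subfield_q q" for c and v :: "'n \<Rightarrow> 'a ^ 2"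
    using twist_sum_scale[OF that] .
  have "inj (twist q :: 'a ^ 2 \<Rightarrow> 'a ^ 2)"
    by (rule inj_on_inverseI[of _ "twist q"]) (rule twist_twist)
  moreover have "range (twist q :: 'a ^ 2 \<Rightarrow> 'a ^ 2) = UNIV"
    by (rule surjI[of "twist q"]) (rule twist_twist)
  ultimately show ?thesis
    using is_Fq_basis_linear_image_iff[OF lin _ q_pos, where S = UNIV] by simp
qed

lemma is_Fq_basis_U_param_iff:
  "is_Fq_basis q (\<lambda>j. U_param q (z j)) (U_set q) \<longleftrightarrow> is_Fq_basis q (z :: 'n::finite \<Rightarrow> 'a ^ 2) UNIV"
proof -
  have lin: "U_param q (\<Sum>i\<in>UNIV. c i *s v i) = (\<Sum>i\<in>UNIV. c i *s U_param q (v i))"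
    if "\<And>i. c i \<in> subfield_q q" for c and v :: "'n \<Rightarrow> 'a ^ 2"
    using U_param_sum_scale[OF that] .
  show ?thesis
    using is_Fq_basis_linear_image_iff[OF lin inj_U_param q_pos, where S = UNIV]
    by (simp add: U_set_eq_range_U_param)
qed

lemma conj_vector_pairing:
  "(\<Sum>s\<in>UNIV. conj_vector q v $ s * conj_vector q w $ s) = trace_form q 4 v (w :: 'a ^ 2)"
  by (simp add: conj_vector_def trace_form_def field_trace_def sum_8 sum_2 frob_mult
      frob_add[OF q_char] eval_nat_numeral add_ac)

lemma conj_vector_dual_basis:
  assumes "\<And>i j. trace_form q 4 (z i) (z' j) = (if i = j then 1 else 0)"
  shows "transpose (generator_matrix (\<lambda>j. conj_vector q (z' j)))
      ** generator_matrix (\<lambda>j. conj_vector q (z j :: 'a ^ 2)) = mat 1"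
proof -
  have "(\<Sum>s\<in>UNIV. conj_vector q (z' i) $ s * conj_vector q (z j) $ s) = (if i = j then 1 else 0)"
    for i j
    unfolding conj_vector_pairing trace_form_commute[of q 4 "z' i"] assms by simp
  then show ?thesis
    by (simp add: vec_eq_iff matrix_matrix_mult_def transpose_def generator_matrix_def mat_def)
qed

lemma dual_code_assoc_code_U_param:
  fixes z z' :: "8 \<Rightarrow> 'a ^ 2"
  assumes "\<And>i j. trace_form q 4 (z i) (z' j) = (if i = j then 1 else 0)"
  shows "dual_code (assoc_code (\<lambda>j. U_param q (z j)))
      = assoc_code (\<lambda>j. U_param q (twist q (z' j)))"
  unfolding assoc_code_eq_row_space U_param_twist
  unfolding U_param_eq_U_matrix generator_matrix_matrix_vector_mult
  by (rule dual_code_row_space_factor[OF conj_vector_dual_basis[OF assms] U_matrix_kernel[OF char]])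

lemma dual_code_assoc_code_U_basis:
  fixes b :: "8 \<Rightarrow> 'a ^ 4"
  assumes "is_Fq_basis q b (U_set q)"
  obtains b' where "is_Fq_basis q b' (U_set q)" "dual_code (assoc_code b) = assoc_code b'"
proof -
  have "\<forall>j. \<exists>w. b j = U_param q w"
    using is_Fq_basis_mem[OF q_char assms] by (auto simp: U_set_eq_range_U_param)
  from choice[OF this] obtain z where "\<forall>j. b j = U_param q (z j)" ..
  then have b: "b = (\<lambda>j. U_param q (z j))"
    by (simp add: fun_eq_iff)
  then have z: "is_Fq_basis q z UNIV"
    using assms is_Fq_basis_U_param_iff[of z] by simp
  then obtain z' where dual: "\<And>i j. trace_form q 4 (z i) (z' j) = (if i = j then 1 else 0)"
    using trace_dual_basis_exists[OF q_char h_pos card] by auto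
  then have "is_Fq_basis q z' UNIV"
    using trace_dual_basis_is_basis[OF q_char h_pos card _ z] by simp
  then have "is_Fq_basis q (\<lambda>j. twist q (z' j)) UNIV"
    using is_Fq_basis_twist_iff[of z'] by simp
  then have "is_Fq_basis q (\<lambda>j. U_param q (twist q (z' j))) (U_set q)"
    using is_Fq_basis_U_param_iff[of "\<lambda>j. twist q (z' j)"] by simp
  moreover have "dual_code (assoc_code b) = assoc_code (\<lambda>j. U_param q (twist q (z' j)))"
    unfolding b by (rule dual_code_assoc_code_U_param[OF dual])
  ultimately show ?thesis
    by (rule that)
qed

end

theorem proposition4p14:
  fixes b :: "8 \<Rightarrow> 'a::{field,finite} ^ 4"
    and q h :: nat
  assumes "q = 2 ^ h" and "odd h"
    and "CARD('a) = q ^ 4"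
    and "is_Fq_basis q b (U_set q)"
  shows "codes_equiv q (assoc_code b) (dual_code (assoc_code b))"
proof -
  have char: "CHAR('a) = 2"
    by (rule CHAR_eq_2_if_CARD_power_2[of "h * 4"]) (simp add: assms(1,3) power_mult)
  have "q = CHAR('a) ^ h"
    using char assms(1) by simp
  moreover obtain b' where "is_Fq_basis q b' (U_set q)" "dual_code (assoc_code b) = assoc_code b'"
    using dual_code_assoc_code_U_basis[OF char assms(1,3,4)] by blast
  ultimately show ?thesis
    using codes_equiv_if_Fq_bases[OF _ assms(4)] by simp
qed

end
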